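(* Let $(X,d)$ be a pointed metric space and let $((x_i,y_i))_{i\in I}$ be a Lipschitz interpolating family in $\widetilde X$ for $\mathrm{Lip}_0(X)$ with Lipschitz interpolation constant $M$, and let $T$ be its Lipschitz interpolating operator. Assume that there exists a bounded linear operator $R:\ell_\infty(I)\to\mathrm{Lip}_0(X)$ with $\|R\|\leq M$ and $T\circ R=\mathrm{Id}_{\ell_\infty(I)}$. Then there exists a Beurling set $(f_i)_{i\in I}$ of functions in $\mathrm{Lip}_0(X)$ for $((x_i,y_i))_{i\in I}$.
   Context: All spaces are real. $(X,d)$ is a metric space with base point $0$, $\widetilde{X}=\{(x,y)\in X\times X: x\neq y\}$. $\mathrm{Lip}_0(X)$ is the Banach space of Lipschitz $f:X\to\mathbb{R}$ with $f(0)=0$, normed by $\|f\|=\sup_{(x,y)\in\widetilde X}|f(x)-f(y)|/d(x,y)$. For a family $((x_i,y_i))_{i\in I}$ in $\widetilde X$, its Lipschitz interpolating operator is $T:\mathrm{Lip}_0(X)\to\ell_\infty(I)$, $T(f)=\big((f(x_i)-f(y_i))/d(x_i,y_i)\big)_{i\in I}$; the family is Lipschitz interpolating for $\mathrm{Lip}_0(X)$ if $T$ is surjective, and then its Lipschitz interpolation constant is $M=\inf\{K\geq 1: \forall \alpha\in\ell_\infty(I), \|\alpha\|_\infty\le1,\ \exists f\in\mathrm{Lip}_0(X),\ \|f\|\le K,\ T(f)=\alpha\}$. A Beurling set of functions in $\mathrm{Lip}_0(X)$ for such a family (with constant $M$) is a family $(f_i)_{i\in I}$ of functions $f_i:X\to\mathbb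 R$ with $f_i(0)=0$ for all $i$, $(f_i(x_j)-f_i(y_j))/d(x_j,y_j)=\delta_{ij}$ (Kronecker delta) for all $i,j\in I$, and $\sup_{(x,y)\in\widetilde X}\sum_{i\in I}|f_i(x)-f_i(y)|/d(x,y)\leq M$. *)

theory Defs
  imports "HOL-Analysis.Analysis"
begin

definition lip_quotients :: "('a::metric_space \<Rightarrow> real) \<Rightarrow> real set" where
  "lip_quotients f = {\<bar>f p - f q\<bar> / dist p q | p q. p \<noteq> q}"

definition lip_norm :: "('a::metric_space \<Rightarrow> real) \<Rightarrow> real" where
  "lip_norm f = Sup (insert 0 (lip_quotients f))"

definition Lip0 :: "'a::metric_space \<Rightarrow> ('a \<Rightarrow> real) set" where
  "Lip0 z0 = {f. f z0 = 0 \<and> bdd_above (lip_quotients f)}"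

definition linf :: "'i set \<Rightarrow> ('i \<Rightarrow> real) set" where
  "linf I = {\<alpha>. (\<forall>i. i \<notin> I \<longrightarrow> \<alpha> i = 0) \<and> bdd_above ((\<lambda>i. \<bar>\<alpha> i\<bar>) ` I)}"

definition linf_norm :: "'i set \<Rightarrow> ('i \<Rightarrow> real) \<Rightarrow> real" where
  "linf_norm I \<alpha> = Sup (insert 0 ((\<lambda>i. \<bar>\<alpha> i\<bar>) ` I))"

definition lip_interp_op ::
  "'i set \<Rightarrow> ('i \<Rightarrow> 'a::metric_space) \<Rightarrow> ('i \<Rightarrow> 'a) \<Rightarrow> ('a \<Rightarrow> real) \<Rightarrow> 'i \<Rightarrow> real" where
  "lip_interp_op I x y f = (\<lambda>i. if i \<in> I then (f (x i) - f (y i)) / dist (x i) (y i) else 0)"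

definition lip_interpolating ::
  "'a::metric_space \<Rightarrow> 'i set \<Rightarrow> ('i \<Rightarrow> 'a) \<Rightarrow> ('i \<Rightarrow> 'a) \<Rightarrow> bool" where
  "lip_interpolating z0 I x y \<longleftrightarrow>
     (\<forall>i\<in>I. x i \<noteq> y i) \<and>
     (\<forall>\<alpha>\<in>linf I. \<exists>f\<in>Lip0 z0. lip_interp_op I x y f = \<alpha>)"

definition lip_interp_const ::
  "'a::metric_space \<Rightarrow> 'i set \<Rightarrow> ('i \<Rightarrow> 'a) \<Rightarrow> ('i \<Rightarrow> 'a) \<Rightarrow> real" where
  "lip_interp_const z0 I x y =
     Inf {K. K \<ge> 1 \<and> (\<forall>\<alpha>\<in>linf I. linf_norm I \<alpha> \<le> 1 \<longrightarrow>
              (\<exists>f\<in>Lip0 z0. lip_norm f \<le> K \<and> lip_interp_op I x y f = \<alpha>))}"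

definition beurling_set ::
  "'a::metric_space \<Rightarrow> 'i set \<Rightarrow> ('i \<Rightarrow> 'a) \<Rightarrow> ('i \<Rightarrow> 'a) \<Rightarrow> real \<Rightarrow> ('i \<Rightarrow> 'a \<Rightarrow> real) \<Rightarrow> bool" where
  "beurling_set z0 I x y M fs \<longleftrightarrow>
     (\<forall>i\<in>I. fs i z0 = 0) \<and>
     (\<forall>i\<in>I. \<forall>j\<in>I. (fs i (x j) - fs i (y j)) / dist (x j) (y j) = (if i = j then 1 else 0)) \<and>
     (\<forall>p q. p \<noteq> q \<longrightarrow>
        (\<lambda>i. \<bar>fs i p - fs i q\<bar> / dist p q) summable_on I \<and>
        (\<Sum>\<^sub>\<infinity>i\<in>I. \<bar>fs i p - fs i q\<bar> / dist p q) \<le> M)"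

end

theory Submission
  imports Defs
begin

text \<open>With \<open>e\<^sub>i\<close> the unit vectors of \<open>\<ell>\<^sub>\<infinity>(I)\<close>, the functions \<open>f\<^sub>i = R e\<^sub>i\<close> interpolate
  the Kronecker delta because \<open>T \<circ> R = Id\<close>. Given \<open>p \<noteq> q\<close> and a finite \<open>F \<subseteq> I\<close>, take the
  signs \<open>s\<^sub>i = sgn (f\<^sub>i p - f\<^sub>i q)\<close>. By linearity \<open>R (\<Sum>i\<in>F. s\<^sub>i e\<^sub>i) = \<Sum>i\<in>F. s\<^sub>i f\<^sub>i\<close>, a function
  of Lipschitz norm at most \<open>M\<close> whose difference quotient at \<open>(p, q)\<close> is
  \<open>\<Sum>i\<in>F. \<bar>f\<^sub>i p - f\<^sub>i q\<bar> / d(p, q)\<close>. So all finite partial sums, and hence the unconditional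
  sum over \<open>I\<close>, are bounded by \<open>M\<close>.\<close>

lemma lip_quotient_le_lip_norm:
  assumes "f \<in> Lip0 z0" "p \<noteq> q"
  shows "\<bar>f p - f q\<bar> / dist p q \<le> lip_norm f"
  using assms unfolding lip_norm_def Lip0_def
  by (intro cSup_upper) (auto simp: lip_quotients_def)

lemma linf_norm_nonneg: "\<alpha> \<in> linf I \<Longrightarrow> 0 \<le> linf_norm I \<alpha>"
  unfolding linf_norm_def linf_def by (intro cSup_upper) auto

lemma linf_norm_le:
  assumes "\<And>i. i \<in> I \<Longrightarrow> \<bar>\<alpha> i\<bar> \<le> c" "0 \<le> c"
  shows "linf_norm I \<alpha> \<le> c"
  unfolding linf_norm_def using assms by (intro cSup_least) auto

lemma finite_support_in_linf:
  assumes "finite F" "F \<subseteq> I"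
  shows "(\<lambda>j. if j \<in> F then s j else 0) \<in> linf I"
proof -
  have "bdd_above ((\<lambda>j. \<bar>if j \<in> F then s j else 0\<bar>) ` I)"
    by (rule bdd_above_mono[OF bdd_above_finite[of "insert 0 ((\<lambda>j. \<bar>s j\<bar>) ` F)"]])
       (use assms(1) in auto)
  then show ?thesis
    unfolding linf_def using assms(2) by auto
qed

lemma indicator_singleton_in_linf:
  assumes "i \<in> I"
  shows "indicator {i} \<in> linf I"
proof -
  have "indicator {i} = (\<lambda>j. if j \<in> {i} then 1 else 0)"
    by (auto simp: fun_eq_iff)
  also have "\<dots> \<in> linf I"
    using assms by (intro finite_support_in_linf) auto
  finally show ?thesis .
qed

lemma lip_interp_const_ge_one:
  assumes "1 \<le> K"
    and "\<forall>\<alpha>\<in>linf I. linf_norm I \<alpha> \<le> 1 \<longrightarrow>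
           (\<exists>f\<in>Lip0 z0. lip_norm f \<le> K \<and> lip_interp_op I x y f = \<alpha>)"
  shows "1 \<le> lip_interp_const z0 I x y"
  unfolding lip_interp_const_def using assms by (intro cInf_greatest) auto

locale lip_bounded_right_inverse =
  fixes z0 :: "'a::metric_space"
    and I :: "'i set"
    and x y :: "'i \<Rightarrow> 'a"
    and M :: real
    and R :: "('i \<Rightarrow> real) \<Rightarrow> ('a \<Rightarrow> real)"
  assumes M_nonneg: "0 \<le> M"
    and R_maps: "\<And>\<alpha>. \<alpha> \<in> linf I \<Longrightarrow> R \<alpha> \<in> Lip0 z0"
    and R_linear: "\<And>\<alpha> \<beta> a b. \<alpha> \<in> linf I \<Longrightarrow> \<beta> \<in> linf I \<Longrightarrow>
                     R (\<lambda>i. a * \<alpha> i + b * \<beta> i) = (\<lambda>p. a * R \<alpha> p + b * R \<beta> p)"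
    and R_norm: "\<And>\<alpha>. \<alpha> \<in> linf I \<Longrightarrow> lip_norm (R \<alpha>) \<le> M * linf_norm I \<alpha>"
    and TR_id: "\<And>\<alpha>. \<alpha> \<in> linf I \<Longrightarrow> lip_interp_op I x y (R \<alpha>) = \<alpha>"
begin

definition beurling_fun :: "'i \<Rightarrow> 'a \<Rightarrow> real" where
  "beurling_fun i = R (indicator {i})"

lemma R_zero: "R (\<lambda>_. 0) = (\<lambda>_. 0)"
proof -
  have zero: "(\<lambda>_. 0) \<in> linf I"
    unfolding linf_def by auto
  show ?thesis
    using R_linear[OF zero zero, of 0 0] by simp
qed

lemma R_finite_support:
  assumes "finite F" "F \<subseteq> I"
  shows "R (\<lambda>j. if j \<in> F then s j else 0) = (\<lambda>p. \<Sum>i\<in>F. s i * beurling_fun i p)"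
  using assms
proof (induction F rule: finite_induct)
  case empty
  show ?case by (simp add: R_zero)
next
  case (insert k F)
  have split: "(\<lambda>j. if j \<in> insert k F then s j else 0) =
               (\<lambda>j. 1 * (if j \<in> F then s j else 0) + s k * indicator {k} j)"
    using insert.hyps(2) by (auto simp: indicator_def)
  have "R (\<lambda>j. if j \<in> insert k F then s j else 0) =
        (\<lambda>p. R (\<lambda>j. if j \<in> F then s j else 0) p + s k * beurling_fun k p)"
    unfolding split
    using R_linear[of "\<lambda>j. if j \<in> F then s j else 0" "indicator {k}" 1 "s k"] insert
    by (simp add: finite_support_in_linf indicator_singleton_in_linf beurling_fun_def)
  then show ?case
    using insert by (simp add: add.commute)
qed

lemma finite_sum_quotients_le:
  assumes "finite F" "F \<subseteq> I" "p \<noteq> q"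
  shows "(\<Sum>i\<in>F. \<bar>beurling_fun i p - beurling_fun i q\<bar> / dist p q) \<le> M"
proof -
  define s where "s i = sgn (beurling_fun i p - beurling_fun i q)" for i
  define \<sigma> where "\<sigma> = (\<lambda>j. if j \<in> F then s j else 0)"
  have \<sigma>_linf: "\<sigma> \<in> linf I"
    unfolding \<sigma>_def using assms(1,2) by (rule finite_support_in_linf)
  have "R \<sigma> p - R \<sigma> q = (\<Sum>i\<in>F. s i * (beurling_fun i p - beurling_fun i q))"
    unfolding \<sigma>_def R_finite_support[OF assms(1,2)]
    by (simp add: sum_subtractf right_diff_distrib)
  also have "\<dots> = (\<Sum>i\<in>F. \<bar>beurling_fun i p - beurling_fun i q\<bar>)"
    by (rule sum.cong) (auto simp: s_def sgn_real_def)
  finally have "(\<Sum>i\<in>F. \<bar>beurling_fun i p - beurling_fun i q\<bar> / dist p q) =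
                (R \<sigma> p - R \<sigma> q) / dist p q"
    by (simp add: sum_divide_distrib)
  also have "\<dots> \<le> \<bar>R \<sigma> p - R \<sigma> q\<bar> / dist p q"
    by (simp add: divide_right_mono)
  also have "\<dots> \<le> lip_norm (R \<sigma>)"
    using R_maps[OF \<sigma>_linf] assms(3) by (rule lip_quotient_le_lip_norm)
  also have "\<dots> \<le> M * linf_norm I \<sigma>"
    using \<sigma>_linf by (rule R_norm)
  also have "\<dots> \<le> M"
    using M_nonneg linf_norm_le[of I \<sigma> 1]
    by (intro mult_left_le) (auto simp: \<sigma>_def s_def abs_sgn_eq)
  finally show ?thesis .
qed

lemma beurling_set: "beurling_set z0 I x y M beurling_fun"
  unfolding beurling_set_def
proof (intro conjI ballI allI impI)
  fix i assume "i \<in> I"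
  then show "beurling_fun i z0 = 0"
    using R_maps[OF indicator_singleton_in_linf] unfolding beurling_fun_def Lip0_def by simp
next
  fix i j assume "i \<in> I" "j \<in> I"
  then have "lip_interp_op I x y (beurling_fun i) j = indicator {i} j"
    unfolding beurling_fun_def using TR_id[OF indicator_singleton_in_linf] by simp
  then show "(beurling_fun i (x j) - beurling_fun i (y j)) / dist (x j) (y j) =
             (if i = j then 1 else 0)"
    using \<open>j \<in> I\<close> unfolding lip_interp_op_def by auto
next
  fix p q :: 'a assume "p \<noteq> q"
  have finite_sums_le: "(\<Sum>i\<in>F. \<bar>beurling_fun i p - beurling_fun i q\<bar> / dist p q) \<le> M"
    if "finite F" "F \<subseteq> I" for F
    using that \<open>p \<noteq> q\<close> by (rule finite_sum_quotients_le)
  show summable: "(\<lambda>i. \<bar>beurling_fun i p - beurling_fun i q\<bar> / dist p q) summable_on I"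
    by (rule nonneg_bdd_above_summable_on) (auto intro: bdd_aboveI[where M = M] finite_sums_le)
  show "(\<Sum>\<^sub>\<infinity>i\<in>I. \<bar>beurling_fun i p - beurling_fun i q\<bar> / dist p q) \<le> M"
    using summable finite_sums_le by (rule infsum_le_finite_sums)
qed

end

theorem theorem3p10:
  fixes z0 :: "'a::metric_space"
    and I :: "'i set"
    and x y :: "'i \<Rightarrow> 'a"
    and M :: real
    and R :: "('i \<Rightarrow> real) \<Rightarrow> ('a \<Rightarrow> real)"
  assumes interp: "lip_interpolating z0 I x y"
    and M_def: "M = lip_interp_const z0 I x y"
    and R_maps: "\<And>\<alpha>. \<alpha> \<in> linf I \<Longrightarrow> R \<alpha> \<in> Lip0 z0"
    and R_linear: "\<And>\<alpha> \<beta> a b. \<alpha> \<in> linf I \<Longrightarrow> \<beta> \<in> linf I \<Longrightarrow>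
                     R (\<lambda>i. a * \<alpha> i + b * \<beta> i) = (\<lambda>p. a * R \<alpha> p + b * R \<beta> p)"
    and R_norm: "\<And>\<alpha>. \<alpha> \<in> linf I \<Longrightarrow> lip_norm (R \<alpha>) \<le> M * linf_norm I \<alpha>"
    and TR_id: "\<And>\<alpha>. \<alpha> \<in> linf I \<Longrightarrow> lip_interp_op I x y (R \<alpha>) = \<alpha>"
  shows "\<exists>fs. beurling_set z0 I x y M fs"
proof -
  txt \<open>\<open>R\<close> itself shows that \<open>max 1 M\<close> is an admissible interpolation constant, so the
    infimum \<open>M\<close> is at least 1; the hypothesis \<open>interp\<close> is implied by \<open>TR_id\<close> and not needed.\<close>
  have "\<exists>f\<in>Lip0 z0. lip_norm f \<le> max 1 M \<and> lip_interp_op I x y f = \<alpha>"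
    if "\<alpha> \<in> linf I" "linf_norm I \<alpha> \<le> 1" for \<alpha>
  proof (intro bexI conjI)
    have "M * linf_norm I \<alpha> \<le> max 1 M"
      using mult_left_le[OF that(2), of M] mult_nonpos_nonneg[OF _ linf_norm_nonneg[OF that(1)], of M]
      by (cases "0 \<le> M") auto
    then show "lip_norm (R \<alpha>) \<le> max 1 M"
      using R_norm[OF that(1)] by linarith
  qed (use that R_maps TR_id in auto)
  then have "1 \<le> M"
    using lip_interp_const_ge_one[of "max 1 M" I z0 x y] M_def by auto
  then interpret lip_bounded_right_inverse z0 I x y M R
    by unfold_locales (use R_maps R_linear R_norm TR_id in auto)
  show ?thesis
    using beurling_set by blast
qed

end
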